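(* Let $P:\mathcal C^{op}\to\mathbf{Pos}$ and $Q:\mathcal D^{op}\to\mathbf{Pos}$ be doctrines and $(L,\lambda)\dashv(R,\rho)$ an adjunction in $\mathbf{IdxPos}$ with unit $\eta$ and counit $\epsilon$. Let $\mathsf K$ be the associated comonad on $Q$, with underlying comonad $(LR,L\eta R,\epsilon)$ on $\mathcal D$ and $\kappa=(\lambda R^{op})\cdot\rho$ (components $\kappa_Y=\lambda_{RY}\circ\rho_Y:QY\to Q(LRY)$); let $\mathcal D_K$ be the category of coalgebras for $(LR,L\eta R,\epsilon)$, $U:\mathcal D_K\to\mathcal D$ the forgetful functor, and $\square^{\mathsf K}$ the interior operator on $Q\circ U^{op}$ given by $\square^{\mathsf K}_{(Y,c)}=Q(c)\circ\lambda_{RY}\circ\rho_Y$. Let $\square^{\mathbb A}$ be the interior operator on $Q\circ L^{op}$ given by $\square^{\mathbb A}_X=\lambda_X\circ P(\eta_X)\circ\rho_{LX}$. Let $K:\mathcal C\to\mathcal D_K$ be the comparison functor $KX=(LX,L\eta_X)$, $Kf=Lf$ (so $U\circ K=L$). Then $(K,\mathrm{id}):(Q\circ L^{op},\square^{\mathbb A})\to(Q\circ U^{op},\square^{\mathsf K})$ is a 1-arrow in $\mathbf{IdxPos}$ and $\square^{\mathbb A}=\square^{\mathsf K}K$, i.e. $\square^{\mathbb A}_X=\square^{\mathsf K}_{KX}$ for every object $X$ of $\mathcal C$.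
   Context: A doctrine is a functor $P:\mathcal C^{op}\to\mathbf{Pos}$; for $t:X\to Y$, $P(t):PY\to PX$ is reindexing. In the 2-category $\mathbf{IdxPos}$, a 1-arrow $(F,f):P\to Q$ (with $P:\mathcal C^{op}\to\mathbf{Pos}$, $Q:\mathcal D^{op}\to\mathbf{Pos}$) is a functor $F:\mathcal C\to\mathcal D$ with a natural transformation $f:P\Rightarrow Q\circ F^{op}$; a 2-arrow $\theta:(F,f)\Rightarrow(F',f')$ is a natural transformation $\theta:F\Rightarrow F'$ with $f_X(\alpha)\le Q(\theta_X)(f'_X(\alpha))$ for all $X,\alpha$; composition of $(G,g)$ then $(F,f)$ is $(FG,(fG^{op})\cdot g)$ (components $f_{GX}\circ g_X$). An adjunction $(L,\lambda)\dashv(R,\rho)$ in $\mathbf{IdxPos}$ amounts to: $L\dashv R$ adjunction of categories with unit $\eta:\mathrm{Id}_{\mathcal C}\Rightarrow RL$ and counit $\epsilon:LR\Rightarrow\mathrm{Id}_{\mathcal D}$, natural $\lambda:P\Rightarrow QL^{op}$, $\rho:Q\Rightarrow PR^{op}$, with $\alpha\le P(\eta_X)(\rho_{LX}(\lambda_X\alpha))$ and $\lambda_{RY}(\rho_Y\beta)\le Q(\epsilon_Y)(\beta)$. An interior operator on a doctrine $M$ is a natural $\square:M\Rightarrow M$ with $\square_X\alpha\le\alpha$ and $\square_X\alpha\le\square_X\square_X\alpha$. Coalgebras for a comonad $(T,\delta,e)$ on $\mathcal D$ are $(Y,c:Y\to TY)$ with $e_Yc=\mathrm{id}$, $\delta_Yc=Tc\circ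 c$. *)

theory Defs
  imports Main
begin

record ('o, 'a) cat =
  Ob  :: "'o set"
  Ar  :: "'a set"
  dom :: "'a \<Rightarrow> 'o"
  cod :: "'a \<Rightarrow> 'o"
  cmp :: "'a \<Rightarrow> 'a \<Rightarrow> 'a"   (* cmp C g f = g o f *)
  idt :: "'o \<Rightarrow> 'a"

definition hom :: "('o, 'a) cat \<Rightarrow> 'o \<Rightarrow> 'o \<Rightarrow> 'a set" where
  "hom C X Y = {f \<in> Ar C. dom C f = X \<and> cod C f = Y}"

definition is_category :: "('o, 'a) cat \<Rightarrow> bool" where
  "is_category C \<longleftrightarrow>
     (\<forall>f\<in>Ar C. dom C f \<in> Ob C \<and> cod C f \<in> Ob C) \<and>
     (\<forall>X\<in>Ob C. idt C X \<in> hom C X X) \<and>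
     (\<forall>f\<in>Ar C. \<forall>g\<in>Ar C. cod C f = dom C g \<longrightarrow> cmp C g f \<in> hom C (dom C f) (cod C g)) \<and>
     (\<forall>f\<in>Ar C. cmp C f (idt C (dom C f)) = f \<and> cmp C (idt C (cod C f)) f = f) \<and>
     (\<forall>f\<in>Ar C. \<forall>g\<in>Ar C. \<forall>h\<in>Ar C. cod C f = dom C g \<longrightarrow> cod C g = dom C h \<longrightarrow>
        cmp C h (cmp C g f) = cmp C (cmp C h g) f)"

record ('o1, 'a1, 'o2, 'a2) ftor =
  fo :: "'o1 \<Rightarrow> 'o2"
  fa :: "'a1 \<Rightarrow> 'a2"

definition is_functor :: "('o1, 'a1) cat \<Rightarrow> ('o2, 'a2) cat \<Rightarrow> ('o1, 'a1, 'o2, 'a2) ftor \<Rightarrow> bool" where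
  "is_functor C D F \<longleftrightarrow>
     (\<forall>X\<in>Ob C. fo F X \<in> Ob D) \<and>
     (\<forall>f\<in>Ar C. fa F f \<in> hom D (fo F (dom C f)) (fo F (cod C f))) \<and>
     (\<forall>X\<in>Ob C. fa F (idt C X) = idt D (fo F X)) \<and>
     (\<forall>f\<in>Ar C. \<forall>g\<in>Ar C. cod C f = dom C g \<longrightarrow> fa F (cmp C g f) = cmp D (fa F g) (fa F f))"

definition fcomp :: "('o2, 'a2, 'o3, 'a3) ftor \<Rightarrow> ('o1, 'a1, 'o2, 'a2) ftor \<Rightarrow> ('o1, 'a1, 'o3, 'a3) ftor" where
  "fcomp G F = \<lparr>fo = fo G \<circ> fo F, fa = fa G \<circ> fa F\<rparr>"

definition fid :: "('o, 'a, 'o, 'a) ftor" where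
  "fid = \<lparr>fo = id, fa = id\<rparr>"

definition is_nat_trans :: "('o1, 'a1) cat \<Rightarrow> ('o2, 'a2) cat \<Rightarrow> ('o1, 'a1, 'o2, 'a2) ftor \<Rightarrow>
    ('o1, 'a1, 'o2, 'a2) ftor \<Rightarrow> ('o1 \<Rightarrow> 'a2) \<Rightarrow> bool" where
  "is_nat_trans C D F G \<theta> \<longleftrightarrow>
     (\<forall>X\<in>Ob C. \<theta> X \<in> hom D (fo F X) (fo G X)) \<and>
     (\<forall>f\<in>Ar C. cmp D (\<theta> (cod C f)) (fa F f) = cmp D (fa G f) (\<theta> (dom C f)))"

definition is_cat_adjunction :: "('o1, 'a1) cat \<Rightarrow> ('o2, 'a2) cat \<Rightarrow>
    ('o1, 'a1, 'o2, 'a2) ftor \<Rightarrow> ('o2, 'a2, 'o1, 'a1) ftor \<Rightarrow> ('o1 \<Rightarrow> 'a1) \<Rightarrow> ('o2 \<Rightarrow> 'a2) \<Rightarrow> bool" where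
  "is_cat_adjunction C D L R \<eta> \<epsilon> \<longleftrightarrow>
     is_category C \<and> is_category D \<and> is_functor C D L \<and> is_functor D C R \<and>
     is_nat_trans C C fid (fcomp R L) \<eta> \<and>
     is_nat_trans D D (fcomp L R) fid \<epsilon> \<and>
     (\<forall>X\<in>Ob C. cmp D (\<epsilon> (fo L X)) (fa L (\<eta> X)) = idt D (fo L X)) \<and>
     (\<forall>Y\<in>Ob D. cmp C (fa R (\<epsilon> Y)) (\<eta> (fo R Y)) = idt C (fo R Y))"

text \<open>A doctrine on C: each object X gets a poset (dcar P X, dle P X);
  each arrow t : X -> Y gets the reindexing map drx P t : P Y -> P X.\<close>
record ('o, 'a, 'p) doct =
  dcar :: "'o \<Rightarrow> 'p set"
  dle  :: "'o \<Rightarrow> 'p \<Rightarrow> 'p \<Rightarrow> bool"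
  drx  :: "'a \<Rightarrow> 'p \<Rightarrow> 'p"

definition is_doctrine :: "('o, 'a) cat \<Rightarrow> ('o, 'a, 'p) doct \<Rightarrow> bool" where
  "is_doctrine C P \<longleftrightarrow> is_category C \<and>
     (\<forall>X\<in>Ob C.
        (\<forall>a\<in>dcar P X. dle P X a a) \<and>
        (\<forall>a\<in>dcar P X. \<forall>b\<in>dcar P X. dle P X a b \<longrightarrow> dle P X b a \<longrightarrow> a = b) \<and>
        (\<forall>a\<in>dcar P X. \<forall>b\<in>dcar P X. \<forall>c\<in>dcar P X. dle P X a b \<longrightarrow> dle P X b c \<longrightarrow> dle P X a c)) \<and>
     (\<forall>t\<in>Ar C. (\<forall>a\<in>dcar P (cod C t). drx P t a \<in> dcar P (dom C t)) \<and>
        (\<forall>a\<in>dcar P (cod C t). \<forall>b\<in>dcar P (cod C t).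
            dle P (cod C t) a b \<longrightarrow> dle P (dom C t) (drx P t a) (drx P t b))) \<and>
     (\<forall>X\<in>Ob C. \<forall>a\<in>dcar P X. drx P (idt C X) a = a) \<and>
     (\<forall>f\<in>Ar C. \<forall>g\<in>Ar C. cod C f = dom C g \<longrightarrow>
        (\<forall>a\<in>dcar P (cod C g). drx P (cmp C g f) a = drx P f (drx P g a)))"

definition precomp :: "('o2, 'a2, 'p) doct \<Rightarrow> ('o1, 'a1, 'o2, 'a2) ftor \<Rightarrow> ('o1, 'a1, 'p) doct" where
  "precomp Q F = \<lparr>dcar = dcar Q \<circ> fo F, dle = dle Q \<circ> fo F, drx = drx Q \<circ> fa F\<rparr>"

definition is_doct_nat :: "('o, 'a) cat \<Rightarrow> ('o, 'a, 'p) doct \<Rightarrow> ('o, 'a, 'q) doct \<Rightarrow> ('o \<Rightarrow> 'p \<Rightarrow> 'q) \<Rightarrow> bool" where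
  "is_doct_nat C P Q f \<longleftrightarrow>
     (\<forall>X\<in>Ob C. (\<forall>a\<in>dcar P X. f X a \<in> dcar Q X) \<and>
        (\<forall>a\<in>dcar P X. \<forall>b\<in>dcar P X. dle P X a b \<longrightarrow> dle Q X (f X a) (f X b))) \<and>
     (\<forall>t\<in>Ar C. \<forall>a\<in>dcar P (cod C t). f (dom C t) (drx P t a) = drx Q t (f (cod C t) a))"

definition is_one_arrow :: "('o1, 'a1) cat \<Rightarrow> ('o1, 'a1, 'p) doct \<Rightarrow> ('o2, 'a2) cat \<Rightarrow> ('o2, 'a2, 'q) doct \<Rightarrow>
    ('o1, 'a1, 'o2, 'a2) ftor \<Rightarrow> ('o1 \<Rightarrow> 'p \<Rightarrow> 'q) \<Rightarrow> bool" where
  "is_one_arrow C P D Q F f \<longleftrightarrow> is_functor C D F \<and> is_doct_nat C P (precomp Q F) f"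

definition is_idx_adjunction :: "('o1, 'a1) cat \<Rightarrow> ('o1, 'a1, 'p) doct \<Rightarrow> ('o2, 'a2) cat \<Rightarrow> ('o2, 'a2, 'q) doct \<Rightarrow>
    ('o1, 'a1, 'o2, 'a2) ftor \<Rightarrow> ('o1 \<Rightarrow> 'p \<Rightarrow> 'q) \<Rightarrow> ('o2, 'a2, 'o1, 'a1) ftor \<Rightarrow> ('o2 \<Rightarrow> 'q \<Rightarrow> 'p) \<Rightarrow>
    ('o1 \<Rightarrow> 'a1) \<Rightarrow> ('o2 \<Rightarrow> 'a2) \<Rightarrow> bool" where
  "is_idx_adjunction C P D Q L lam R \<rho> \<eta> \<epsilon> \<longleftrightarrow>
     is_cat_adjunction C D L R \<eta> \<epsilon> \<and>
     is_doct_nat C P (precomp Q L) lam \<and>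
     is_doct_nat D Q (precomp P R) \<rho> \<and>
     (\<forall>X\<in>Ob C. \<forall>a\<in>dcar P X. dle P X a (drx P (\<eta> X) (\<rho> (fo L X) (lam X a)))) \<and>
     (\<forall>Y\<in>Ob D. \<forall>b\<in>dcar Q Y. dle Q (fo L (fo R Y)) (lam (fo R Y) (\<rho> Y b)) (drx Q (\<epsilon> Y) b))"

text \<open>Objects: (Y, c) with c : Y -> LRY, eps_Y o c = id, delta_Y o c = LR c o c, where delta_Y = L(eta_{RY}).
  Arrows: triples (source, target, h) with h a coalgebra morphism.\<close>
definition coalg_cat :: "('o1, 'a1) cat \<Rightarrow> ('o2, 'a2) cat \<Rightarrow>
    ('o1, 'a1, 'o2, 'a2) ftor \<Rightarrow> ('o2, 'a2, 'o1, 'a1) ftor \<Rightarrow> ('o1 \<Rightarrow> 'a1) \<Rightarrow> ('o2 \<Rightarrow> 'a2) \<Rightarrow>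
    ('o2 \<times> 'a2, ('o2 \<times> 'a2) \<times> ('o2 \<times> 'a2) \<times> 'a2) cat" where
  "coalg_cat C D L R \<eta> \<epsilon> =
    (let obs = {(Y, c). Y \<in> Ob D \<and> c \<in> hom D Y (fo L (fo R Y)) \<and>
                  cmp D (\<epsilon> Y) c = idt D Y \<and>
                  cmp D (fa L (\<eta> (fo R Y))) c = cmp D (fa L (fa R c)) c}
     in \<lparr>Ob = obs,
         Ar = {(A, B, h). A \<in> obs \<and> B \<in> obs \<and> h \<in> hom D (fst A) (fst B) \<and>
                  cmp D (snd B) h = cmp D (fa L (fa R h)) (snd A)},
         dom = fst,
         cod = (\<lambda>x. fst (snd x)),
         cmp = (\<lambda>g f. (fst f, fst (snd g), cmp D (snd (snd g)) (snd (snd f)))),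
         idt = (\<lambda>A. (A, A, idt D (fst A)))\<rparr>)"

definition forget :: "('o2 \<times> 'a2, ('o2 \<times> 'a2) \<times> ('o2 \<times> 'a2) \<times> 'a2, 'o2, 'a2) ftor" where
  "forget = \<lparr>fo = fst, fa = (\<lambda>x. snd (snd x))\<rparr>"

definition comparison :: "('o1, 'a1) cat \<Rightarrow> ('o1, 'a1, 'o2, 'a2) ftor \<Rightarrow> ('o1 \<Rightarrow> 'a1) \<Rightarrow>
    ('o1, 'a1, 'o2 \<times> 'a2, ('o2 \<times> 'a2) \<times> ('o2 \<times> 'a2) \<times> 'a2) ftor" where
  "comparison C L \<eta> =
    \<lparr>fo = (\<lambda>X. (fo L X, fa L (\<eta> X))),
     fa = (\<lambda>f. ((fo L (dom C f), fa L (\<eta> (dom C f))), (fo L (cod C f), fa L (\<eta> (cod C f))), fa L f))\<rparr>"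

definition boxK :: "('o2, 'a2, 'q) doct \<Rightarrow> ('o2, 'a2, 'o1, 'a1) ftor \<Rightarrow> ('o1 \<Rightarrow> 'p \<Rightarrow> 'q) \<Rightarrow> ('o2 \<Rightarrow> 'q \<Rightarrow> 'p) \<Rightarrow>
    'o2 \<times> 'a2 \<Rightarrow> 'q \<Rightarrow> 'q" where
  "boxK Q R lam \<rho> A = (\<lambda>b. drx Q (snd A) (lam (fo R (fst A)) (\<rho> (fst A) b)))"

definition boxA :: "('o1, 'a1, 'p) doct \<Rightarrow> ('o1, 'a1, 'o2, 'a2) ftor \<Rightarrow> ('o1 \<Rightarrow> 'p \<Rightarrow> 'q) \<Rightarrow> ('o2 \<Rightarrow> 'q \<Rightarrow> 'p) \<Rightarrow>
    ('o1 \<Rightarrow> 'a1) \<Rightarrow> 'o1 \<Rightarrow> 'q \<Rightarrow> 'q" where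
  "boxA P L lam \<rho> \<eta> X = (\<lambda>b. lam X (drx P (\<eta> X) (\<rho> (fo L X) b)))"

end

theory Submission
  imports Defs
begin

(* For every X the pair KX = (LX, L eta_X) is a coalgebra: its counit law is a
   triangle identity, and its coassociativity is L applied to naturality of eta at eta_X; on
   arrows, Lf is a coalgebra morphism by naturality of eta at f. Reindexing Q along K is the same
   as reindexing along L, so the identity is a natural transformation. Finally, naturality of
   lambda at eta_X gives lambda_X o P(eta_X) = Q(L eta_X) o lambda_RLX, which after precomposing
   with rho_LX is exactly boxA_X = boxK_KX. *)

lemma category_dom_cod_ob:
  "is_category C \<Longrightarrow> f \<in> Ar C \<Longrightarrow> dom C f \<in> Ob C \<and> cod C f \<in> Ob C"
  by (simp add: is_category_def)

lemma category_idt_hom: "is_category C \<Longrightarrow> X \<in> Ob C \<Longrightarrow> idt C X \<in> hom C X X"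
  by (simp add: is_category_def)

lemma category_cmp_hom:
  "is_category C \<Longrightarrow> f \<in> Ar C \<Longrightarrow> g \<in> Ar C \<Longrightarrow> cod C f = dom C g \<Longrightarrow>
     cmp C g f \<in> hom C (dom C f) (cod C g)"
  by (simp add: is_category_def)

lemma functor_ob: "is_functor C D F \<Longrightarrow> X \<in> Ob C \<Longrightarrow> fo F X \<in> Ob D"
  by (simp add: is_functor_def)

lemma functor_hom:
  "is_functor C D F \<Longrightarrow> f \<in> Ar C \<Longrightarrow> fa F f \<in> hom D (fo F (dom C f)) (fo F (cod C f))"
  by (simp add: is_functor_def)

lemma functor_idt: "is_functor C D F \<Longrightarrow> X \<in> Ob C \<Longrightarrow> fa F (idt C X) = idt D (fo F X)"
  by (simp add: is_functor_def)

lemma functor_cmp: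
  "is_functor C D F \<Longrightarrow> f \<in> Ar C \<Longrightarrow> g \<in> Ar C \<Longrightarrow> cod C f = dom C g \<Longrightarrow>
     fa F (cmp C g f) = cmp D (fa F g) (fa F f)"
  by (simp add: is_functor_def)

lemma adjunction_unit_hom:
  assumes "is_cat_adjunction C D L R \<eta> \<epsilon>" and "X \<in> Ob C"
  shows "\<eta> X \<in> hom C X (fo R (fo L X))"
  using assms by (simp add: is_cat_adjunction_def is_nat_trans_def fid_def fcomp_def)

lemma adjunction_unit_natural:
  assumes "is_cat_adjunction C D L R \<eta> \<epsilon>" and "f \<in> Ar C"
  shows "cmp C (\<eta> (cod C f)) f = cmp C (fa R (fa L f)) (\<eta> (dom C f))"
  using assms by (simp add: is_cat_adjunction_def is_nat_trans_def fid_def fcomp_def)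

lemma adjunction_left_unit_natural:
  assumes adj: "is_cat_adjunction C D L R \<eta> \<epsilon>" and f: "f \<in> Ar C"
  shows "cmp D (fa L (\<eta> (cod C f))) (fa L f)
       = cmp D (fa L (fa R (fa L f))) (fa L (\<eta> (dom C f)))"
proof -
  from adj have cC: "is_category C" and fL: "is_functor C D L" and fR: "is_functor D C R"
    by (simp_all add: is_cat_adjunction_def)
  have ends: "dom C f \<in> Ob C" "cod C f \<in> Ob C"
    using category_dom_cod_ob[OF cC f] by simp_all
  have eta_cod: "\<eta> (cod C f) \<in> Ar C" "dom C (\<eta> (cod C f)) = cod C f"
    using adjunction_unit_hom[OF adj ends(2)] by (simp_all add: hom_def)
  have eta_dom: "\<eta> (dom C f) \<in> Ar C" "cod C (\<eta> (dom C f)) = fo R (fo L (dom C f))"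
    using adjunction_unit_hom[OF adj ends(1)] by (simp_all add: hom_def)
  have Lf: "fa L f \<in> Ar D" "dom D (fa L f) = fo L (dom C f)"
    using functor_hom[OF fL f] by (simp_all add: hom_def)
  have RLf: "fa R (fa L f) \<in> Ar C" "dom C (fa R (fa L f)) = fo R (fo L (dom C f))"
    using functor_hom[OF fR Lf(1)] Lf(2) by (simp_all add: hom_def)
  have "cmp D (fa L (\<eta> (cod C f))) (fa L f) = fa L (cmp C (\<eta> (cod C f)) f)"
    using functor_cmp[OF fL f eta_cod(1)] eta_cod(2) by simp
  also have "\<dots> = fa L (cmp C (fa R (fa L f)) (\<eta> (dom C f)))"
    using adjunction_unit_natural[OF adj f] by simp
  also have "\<dots> = cmp D (fa L (fa R (fa L f))) (fa L (\<eta> (dom C f)))"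
    using functor_cmp[OF fL eta_dom(1) RLf(1)] eta_dom(2) RLf(2) by simp
  finally show ?thesis .
qed

lemma comparison_ob_coalg:
  assumes adj: "is_cat_adjunction C D L R \<eta> \<epsilon>" and X: "X \<in> Ob C"
  shows "fo (comparison C L \<eta>) X \<in> Ob (coalg_cat C D L R \<eta> \<epsilon>)"
proof -
  from adj have fL: "is_functor C D L"
    and triangle: "cmp D (\<epsilon> (fo L X)) (fa L (\<eta> X)) = idt D (fo L X)"
    using X by (simp_all add: is_cat_adjunction_def)
  have eta: "\<eta> X \<in> Ar C" "dom C (\<eta> X) = X" "cod C (\<eta> X) = fo R (fo L X)"
    using adjunction_unit_hom[OF adj X] by (simp_all add: hom_def)
  have "fa L (\<eta> X) \<in> hom D (fo L X) (fo L (fo R (fo L X)))"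
    using functor_hom[OF fL eta(1)] eta by simp
  moreover have "cmp D (fa L (\<eta> (fo R (fo L X)))) (fa L (\<eta> X))
               = cmp D (fa L (fa R (fa L (\<eta> X)))) (fa L (\<eta> X))"
    using adjunction_left_unit_natural[OF adj eta(1)] eta by simp
  ultimately show ?thesis
    using functor_ob[OF fL X] triangle by (simp add: comparison_def coalg_cat_def Let_def)
qed

lemma is_functor_comparison:
  assumes adj: "is_cat_adjunction C D L R \<eta> \<epsilon>"
  shows "is_functor C (coalg_cat C D L R \<eta> \<epsilon>) (comparison C L \<eta>)"
  unfolding is_functor_def
proof (intro conjI ballI allI impI)
  from adj have cC: "is_category C" and fL: "is_functor C D L"
    by (simp_all add: is_cat_adjunction_def)
  let ?K = "comparison C L \<eta>" and ?DK = "coalg_cat C D L R \<eta> \<epsilon>"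
  show "fo ?K X \<in> Ob ?DK" if "X \<in> Ob C" for X
    using comparison_ob_coalg[OF adj that] .
  show "fa ?K f \<in> hom ?DK (fo ?K (dom C f)) (fo ?K (cod C f))" if f: "f \<in> Ar C" for f
  proof -
    have ends: "dom C f \<in> Ob C" "cod C f \<in> Ob C"
      using category_dom_cod_ob[OF cC f] by simp_all
    show ?thesis
      using comparison_ob_coalg[OF adj ends(1)] comparison_ob_coalg[OF adj ends(2)]
        functor_hom[OF fL f] adjunction_left_unit_natural[OF adj f]
      by (simp add: comparison_def coalg_cat_def Let_def hom_def)
  qed
  show "fa ?K (idt C X) = idt ?DK (fo ?K X)" if X: "X \<in> Ob C" for X
    using category_idt_hom[OF cC X] functor_idt[OF fL X]
    by (simp add: comparison_def coalg_cat_def Let_def hom_def)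
  show "fa ?K (cmp C g f) = cmp ?DK (fa ?K g) (fa ?K f)"
    if "f \<in> Ar C" "g \<in> Ar C" "cod C f = dom C g" for f g
    using category_cmp_hom[OF cC that] functor_cmp[OF fL that]
    by (simp add: comparison_def coalg_cat_def Let_def hom_def)
qed

lemma precomp_forget_comparison:
  "precomp (precomp Q forget) (comparison C L \<eta>) = precomp Q L"
  by (simp add: precomp_def forget_def comparison_def comp_def)

lemma is_doct_nat_id: "is_doct_nat C P P (\<lambda>X a. a)"
  by (simp add: is_doct_nat_def)

lemma boxA_eq_boxK_comparison:
  assumes adj: "is_idx_adjunction C P D Q L lam R \<rho> \<eta> \<epsilon>"
    and X: "X \<in> Ob C" and a: "a \<in> dcar Q (fo L X)"
  shows "boxA P L lam \<rho> \<eta> X a = boxK Q R lam \<rho> (fo (comparison C L \<eta>) X) a"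
proof -
  from adj have cadj: "is_cat_adjunction C D L R \<eta> \<epsilon>"
    and lam: "is_doct_nat C P (precomp Q L) lam"
    and \<rho>: "is_doct_nat D Q (precomp P R) \<rho>"
    by (simp_all add: is_idx_adjunction_def)
  have eta: "\<eta> X \<in> Ar C" "dom C (\<eta> X) = X" "cod C (\<eta> X) = fo R (fo L X)"
    using adjunction_unit_hom[OF cadj X] by (simp_all add: hom_def)
  have "fo L X \<in> Ob D"
    using cadj X functor_ob[of C D L] by (simp add: is_cat_adjunction_def)
  then have "\<rho> (fo L X) a \<in> dcar P (fo R (fo L X))"
    using \<rho> a by (simp add: is_doct_nat_def precomp_def)
  then have "lam X (drx P (\<eta> X) (\<rho> (fo L X) a))
           = drx Q (fa L (\<eta> X)) (lam (fo R (fo L X)) (\<rho> (fo L X) a))"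
    using lam eta unfolding is_doct_nat_def precomp_def by fastforce
  then show ?thesis
    by (simp add: boxA_def boxK_def comparison_def)
qed

theorem proposition7p1:
  fixes C :: "('o1, 'a1) cat" and D :: "('o2, 'a2) cat"
    and P :: "('o1, 'a1, 'p) doct" and Q :: "('o2, 'a2, 'q) doct"
    and L :: "('o1, 'a1, 'o2, 'a2) ftor" and R :: "('o2, 'a2, 'o1, 'a1) ftor"
    and lam :: "'o1 \<Rightarrow> 'p \<Rightarrow> 'q" and \<rho> :: "'o2 \<Rightarrow> 'q \<Rightarrow> 'p"
    and \<eta> :: "'o1 \<Rightarrow> 'a1" and \<epsilon> :: "'o2 \<Rightarrow> 'a2"
  assumes "is_doctrine C P" and "is_doctrine D Q"
    and "is_idx_adjunction C P D Q L lam R \<rho> \<eta> \<epsilon>"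
  shows "is_one_arrow C (precomp Q L) (coalg_cat C D L R \<eta> \<epsilon>) (precomp Q forget)
           (comparison C L \<eta>) (\<lambda>X a. a)
       \<and> (\<forall>X\<in>Ob C. \<forall>a\<in>dcar Q (fo L X).
            boxA P L lam \<rho> \<eta> X a = boxK Q R lam \<rho> (fo (comparison C L \<eta>) X) a)"
proof -
  have "is_cat_adjunction C D L R \<eta> \<epsilon>"
    using assms(3) by (simp add: is_idx_adjunction_def)
  then have "is_functor C (coalg_cat C D L R \<eta> \<epsilon>) (comparison C L \<eta>)"
    by (rule is_functor_comparison)
  then have "is_one_arrow C (precomp Q L) (coalg_cat C D L R \<eta> \<epsilon>) (precomp Q forget)
               (comparison C L \<eta>) (\<lambda>X a. a)"
    by (simp add: is_one_arrow_def precomp_forget_comparison is_doct_nat_id)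
  then show ?thesis
    using boxA_eq_boxK_comparison[OF assms(3)] by blast
qed

end
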